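(* Assume $A$ is finite, each $f_a$ is differentiable on $(0,1]$ with $f_a'>0$, $\phi_a=1/f_a'$. Let $\mathcal D_0\subseteq\mathcal D$ be open, $\theta\in\mathcal D_0$, and assume $\alpha$ and each $p_{\cdot,a}$ are differentiable at $\theta$ with $\sum_a\partial p_{\theta,a}/\partial\theta_j=0$, and that $g_{i,j}(\theta)$ exists. Then for all $i,j$, $$I_{i,j}(\theta)=z(\theta)\,g_{i,j}(\theta)=z(\theta)^2\,\sigma_{i,j}(\theta).$$
   Context: Let $A$ be a finite set, $\mathcal M_1^+(A)$ the probability distributions on $A$. For each $a$, $h_a:[0,1]\to\mathbb R$ is continuous, strictly concave, $h_a(0)=h_a(1)=0$, differentiable on $(0,1)$ with $h_a'=-f_a$; $I(p)=\sum_ah_a(p_a)$. $H_1,\dots,H_n:A\to\mathbb R$, $\langle p,X\rangle=\sum_ap_aX(a)$. $p^*$ satisfies the variational principle with parameters $\theta\in\mathbb R^n$ if $+\infty>I(p^* )-\sum_j\theta_j\langle p^*,H_j\rangle\ge I(p)-\sum_j\theta_j\langle p,H_j\rangle$ for all $p$. $\mathcal D$ is the set of $\theta$ for which such $p^*$ exists; it is unique, denoted $p_\theta$, and there is $\alpha(\theta)\in\mathbb R$ with $f_a(p_{\theta,a})=-\alpha(\theta)-\sum_j\theta_jH_j(a)$ whenever $p_{\theta,a}>0$. Massieu function: $\Phi(\theta)=I(p_\theta)-\sum_j\theta_j\langle p_\theta,H_j\rangle$; metric tensor $g_{i,j}(\theta)=\partial^2\Phi/\partial\theta_i\partial\theta_j$.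 Let $z(\theta)=\sum_{a:p_{\theta,a}>0}\phi_a(p_{\theta,a})$ and escort distribution $P_{\theta,a}=\phi_a(p_{\theta,a})/z(\theta)$ if $p_{\theta,a}>0$, $P_{\theta,a}=0$ otherwise. Score variables $X_{i,a}(\theta)=\frac1{P_{\theta,a}}\frac{\partial}{\partial\theta_i}p_{\theta,a}$ (for $P_{\theta,a}>0$); generalised Fisher information $I_{i,j}(\theta)=\sum_{a:P_{\theta,a}>0}P_{\theta,a}X_{i,a}(\theta)X_{j,a}(\theta)$; covariance $\sigma_{i,j}(\theta)=\langle P_\theta,H_iH_j\rangle-\langle P_\theta,H_i\rangle\langle P_\theta,H_j\rangle$. *)

theory Defs
  imports "HOL-Analysis.Analysis"
begin

definition strictly_concave_on :: "real set \<Rightarrow> (real \<Rightarrow> real) \<Rightarrow> bool" where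
  "strictly_concave_on S g \<longleftrightarrow>
     (\<forall>x\<in>S. \<forall>y\<in>S. \<forall>t. x \<noteq> y \<and> 0 < t \<and> t < 1 \<longrightarrow>
        (1 - t) * g x + t * g y < g ((1 - t) * x + t * y))"

definition prob_dists :: "('a::finite \<Rightarrow> real) set" where
  "prob_dists = {p. (\<forall>a. 0 \<le> p a) \<and> (\<Sum>a\<in>UNIV. p a) = 1}"

definition entropyI :: "('a::finite \<Rightarrow> real \<Rightarrow> real) \<Rightarrow> ('a \<Rightarrow> real) \<Rightarrow> real" where
  "entropyI h p = (\<Sum>a\<in>UNIV. h a (p a))"

definition pairing :: "('a::finite \<Rightarrow> real) \<Rightarrow> ('a \<Rightarrow> real) \<Rightarrow> real" where
  "pairing p X = (\<Sum>a\<in>UNIV. p a * X a)"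

definition vp_obj :: "('a::finite \<Rightarrow> real \<Rightarrow> real) \<Rightarrow> ('n::finite \<Rightarrow> 'a \<Rightarrow> real)
    \<Rightarrow> real^'n \<Rightarrow> ('a \<Rightarrow> real) \<Rightarrow> real" where
  "vp_obj h H \<theta> p = entropyI h p - (\<Sum>j\<in>UNIV. \<theta> $ j * pairing p (H j))"

definition var_principle :: "('a::finite \<Rightarrow> real \<Rightarrow> real) \<Rightarrow> ('n::finite \<Rightarrow> 'a \<Rightarrow> real)
    \<Rightarrow> real^'n \<Rightarrow> ('a \<Rightarrow> real) \<Rightarrow> bool" where
  "var_principle h H \<theta> ps \<longleftrightarrow>
     ps \<in> prob_dists \<and> (\<forall>p\<in>prob_dists. vp_obj h H \<theta> p \<le> vp_obj h H \<theta> ps)"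

definition domD :: "('a::finite \<Rightarrow> real \<Rightarrow> real) \<Rightarrow> ('n::finite \<Rightarrow> 'a \<Rightarrow> real) \<Rightarrow> (real^'n) set" where
  "domD h H = {\<theta>. \<exists>p. var_principle h H \<theta> p}"

definition ptheta :: "('a::finite \<Rightarrow> real \<Rightarrow> real) \<Rightarrow> ('n::finite \<Rightarrow> 'a \<Rightarrow> real)
    \<Rightarrow> real^'n \<Rightarrow> 'a \<Rightarrow> real" where
  "ptheta h H \<theta> = (THE p. var_principle h H \<theta> p)"

definition alpha :: "('a::finite \<Rightarrow> real \<Rightarrow> real) \<Rightarrow> ('a \<Rightarrow> real \<Rightarrow> real) \<Rightarrow> ('n::finite \<Rightarrow> 'a \<Rightarrow> real)
    \<Rightarrow> real^'n \<Rightarrow> real" where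
  "alpha h f H \<theta> = (THE c. \<forall>a. ptheta h H \<theta> a > 0 \<longrightarrow>
       f a (ptheta h H \<theta> a) = - c - (\<Sum>j\<in>UNIV. \<theta> $ j * H j a))"

definition massieu :: "('a::finite \<Rightarrow> real \<Rightarrow> real) \<Rightarrow> ('n::finite \<Rightarrow> 'a \<Rightarrow> real) \<Rightarrow> real^'n \<Rightarrow> real" where
  "massieu h H \<theta> = vp_obj h H \<theta> (ptheta h H \<theta>)"

definition partial_deriv :: "(real^'n \<Rightarrow> real) \<Rightarrow> 'n::finite \<Rightarrow> real^'n \<Rightarrow> real" where
  "partial_deriv F i \<theta> = deriv (\<lambda>t. F (\<theta> + t *\<^sub>R axis i 1)) 0"

definition has_partial :: "(real^'n \<Rightarrow> real) \<Rightarrow> 'n::finite \<Rightarrow> real^'n \<Rightarrow> bool" where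
  "has_partial F i \<theta> \<longleftrightarrow> (\<lambda>t. F (\<theta> + t *\<^sub>R axis i 1)) differentiable (at 0)"

definition metric_g :: "('a::finite \<Rightarrow> real \<Rightarrow> real) \<Rightarrow> ('n::finite \<Rightarrow> 'a \<Rightarrow> real)
    \<Rightarrow> real^'n \<Rightarrow> 'n \<Rightarrow> 'n \<Rightarrow> real" where
  "metric_g h H \<theta> i j = partial_deriv (partial_deriv (massieu h H) j) i \<theta>"

definition metric_g_exists :: "('a::finite \<Rightarrow> real \<Rightarrow> real) \<Rightarrow> ('n::finite \<Rightarrow> 'a \<Rightarrow> real)
    \<Rightarrow> real^'n \<Rightarrow> 'n \<Rightarrow> 'n \<Rightarrow> bool" where
  "metric_g_exists h H \<theta> i j \<longleftrightarrow>
     (\<forall>\<^sub>F \<theta>' in nhds \<theta>. has_partial (massieu h H) j \<theta>') \<and>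
     has_partial (partial_deriv (massieu h H) j) i \<theta>"

text \<open>\<open>\<phi>_a = 1/f_a'\<close>, where \<open>df a\<close> is the derivative of \<open>f a\<close>.\<close>
definition phi :: "('a \<Rightarrow> real \<Rightarrow> real) \<Rightarrow> 'a \<Rightarrow> real \<Rightarrow> real" where
  "phi df a x = 1 / df a x"

definition zfun :: "('a::finite \<Rightarrow> real \<Rightarrow> real) \<Rightarrow> ('a \<Rightarrow> real \<Rightarrow> real) \<Rightarrow> ('n::finite \<Rightarrow> 'a \<Rightarrow> real)
    \<Rightarrow> real^'n \<Rightarrow> real" where
  "zfun h df H \<theta> = (\<Sum>a\<in>{a. ptheta h H \<theta> a > 0}. phi df a (ptheta h H \<theta> a))"

definition escort :: "('a::finite \<Rightarrow> real \<Rightarrow> real) \<Rightarrow> ('a \<Rightarrow> real \<Rightarrow> real) \<Rightarrow> ('n::finite \<Rightarrow> 'a \<Rightarrow> real)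
    \<Rightarrow> real^'n \<Rightarrow> 'a \<Rightarrow> real" where
  "escort h df H \<theta> a =
     (if ptheta h H \<theta> a > 0 then phi df a (ptheta h H \<theta> a) / zfun h df H \<theta> else 0)"

definition score :: "('a::finite \<Rightarrow> real \<Rightarrow> real) \<Rightarrow> ('a \<Rightarrow> real \<Rightarrow> real) \<Rightarrow> ('n::finite \<Rightarrow> 'a \<Rightarrow> real)
    \<Rightarrow> real^'n \<Rightarrow> 'n \<Rightarrow> 'a \<Rightarrow> real" where
  "score h df H \<theta> i a =
     partial_deriv (\<lambda>\<theta>'. ptheta h H \<theta>' a) i \<theta> / escort h df H \<theta> a"

definition fisher :: "('a::finite \<Rightarrow> real \<Rightarrow> real) \<Rightarrow> ('a \<Rightarrow> real \<Rightarrow> real) \<Rightarrow> ('n::finite \<Rightarrow> 'a \<Rightarrow> real)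
    \<Rightarrow> real^'n \<Rightarrow> 'n \<Rightarrow> 'n \<Rightarrow> real" where
  "fisher h df H \<theta> i j =
     (\<Sum>a\<in>{a. escort h df H \<theta> a > 0}.
        escort h df H \<theta> a * score h df H \<theta> i a * score h df H \<theta> j a)"

definition covar :: "('a::finite \<Rightarrow> real \<Rightarrow> real) \<Rightarrow> ('a \<Rightarrow> real \<Rightarrow> real) \<Rightarrow> ('n::finite \<Rightarrow> 'a \<Rightarrow> real)
    \<Rightarrow> real^'n \<Rightarrow> 'n \<Rightarrow> 'n \<Rightarrow> real" where
  "covar h df H \<theta> i j =
     pairing (escort h df H \<theta>) (\<lambda>a. H i a * H j a)
     - pairing (escort h df H \<theta>) (H i) * pairing (escort h df H \<theta>) (H j)"

end

theory Submission
  imports Defs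
begin

(* For \<theta> in the open set D0 the unique solution p_\<theta> of the variational principle
   satisfies the stationarity condition f_a(p_{\<theta>,a}) + \<Sum>_k \<theta>_k H_k(a) = const on its
   support.  Differentiating this along each coordinate axis and using f_a' = 1/\<phi>_a, together
   with \<Sum>_a \<partial>_i p_{\<theta>,a} = 0 and the fact that coordinates vanishing at \<theta> are minimal there,
   yields the response formula
       \<partial>_i p_{\<theta>,a} = z(\<theta>) P_{\<theta>,a} (\<langle>P_\<theta>, H_i\<rangle> - H_i(a)).
   The envelope theorem \<partial>\<Phi>/\<partial>\<theta>_j = -\<langle>p_\<theta>, H_j\<rangle> turns the metric tensor into
   g_{i,j} = -\<Sum>_a \<partial>_i p_{\<theta>,a} H_j(a).  Substituting the response formula into this and into
   the definition of the Fisher information gives g = z \<sigma> and I = z^2 \<sigma>. *)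

lemma prob_dist_nonneg: "p \<in> prob_dists \<Longrightarrow> 0 \<le> p a"
  by (simp add: prob_dists_def)

lemma prob_dist_sum_le_one:
  assumes "p \<in> prob_dists" shows "(\<Sum>c\<in>B. p c) \<le> 1"
proof -
  have "(\<Sum>c\<in>B. p c) \<le> (\<Sum>c\<in>UNIV. p c)"
    by (rule sum_mono2) (use assms in \<open>auto simp: prob_dists_def\<close>)
  thus ?thesis using assms by (simp add: prob_dists_def)
qed

lemma prob_dist_support_nonempty:
  assumes pP: "p \<in> prob_dists" obtains a where "p a > 0"
proof -
  have "\<exists>a. p a \<noteq> 0"
  proof (rule ccontr)
    assume "\<nexists>a. p a \<noteq> 0"
    hence "(\<Sum>a\<in>UNIV. p a) = 0" by simp
    with pP show False by (simp add: prob_dists_def)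
  qed
  with prob_dist_nonneg[OF pP] that show ?thesis by (auto simp: order.order_iff_strict)
qed

lemma pairing_shifted:
  "pairing P (\<lambda>a. (c - X a) * Y a) = c * pairing P Y - pairing P (\<lambda>a. X a * Y a)"
  by (simp add: pairing_def algebra_simps sum_subtractf sum_distrib_left)

lemma pairing_centered_product:
  assumes "(\<Sum>a\<in>UNIV. P a) = 1"
  shows "pairing P (\<lambda>a. (pairing P X - X a) * (pairing P Y - Y a))
       = pairing P (\<lambda>a. X a * Y a) - pairing P X * pairing P Y"
proof -
  have "pairing P (\<lambda>a. pairing P X - X a) = 0"
    using pairing_shifted[of P "pairing P X" X "\<lambda>_. 1"] assms by (simp add: pairing_def)
  moreover have "pairing P (\<lambda>a. g a * d) = pairing P g * d" for g d
    by (simp add: pairing_def sum_distrib_right mult.assoc)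
  ultimately have "pairing P (\<lambda>a. (pairing P X - X a) * pairing P Y) = 0" by simp
  moreover have "pairing P (\<lambda>a. (pairing P X - X a) * (pairing P Y - Y a))
      = pairing P (\<lambda>a. (pairing P X - X a) * pairing P Y) - pairing P (\<lambda>a. (pairing P X - X a) * Y a)"
    by (simp add: pairing_def right_diff_distrib sum_subtractf)
  ultimately show ?thesis by (simp add: pairing_shifted)
qed

lemma vp_obj_midpoint_strict:
  fixes h :: "'a::finite \<Rightarrow> real \<Rightarrow> real" and H :: "'n::finite \<Rightarrow> 'a \<Rightarrow> real"
  assumes h_conc: "\<And>a. strictly_concave_on {0..1} (h a)"
    and pP: "p \<in> prob_dists" and qP: "q \<in> prob_dists" and ne: "p \<noteq> q"
  shows "(vp_obj h H \<theta> p + vp_obj h H \<theta> q) / 2 < vp_obj h H \<theta> (\<lambda>a. (p a + q a) / 2)"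
proof -
  have range: "p a \<in> {0..1}" "q a \<in> {0..1}" for a
    using prob_dist_sum_le_one[OF pP, of "{a}"] prob_dist_sum_le_one[OF qP, of "{a}"]
      prob_dist_nonneg[OF pP] prob_dist_nonneg[OF qP] by auto
  have mid: "(h a (p a) + h a (q a)) / 2 < h a ((p a + q a) / 2)" if "p a \<noteq> q a" for a
  proof -
    have "(1 - 1/2) * h a (p a) + 1/2 * h a (q a) < h a ((1 - 1/2) * p a + 1/2 * q a)"
      using h_conc[of a] range[of a] that unfolding strictly_concave_on_def
      by (elim ballE allE[where x="1/2"]) (auto simp del: diff_numeral_special)
    thus ?thesis by (simp add: add_divide_distrib)
  qed
  have mid_le: "(h a (p a) + h a (q a)) / 2 \<le> h a ((p a + q a) / 2)" for a
    using mid[of a] by (cases "p a = q a") auto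
  obtain a0 where a0: "p a0 \<noteq> q a0" using ne by auto
  have "(\<Sum>a\<in>UNIV. (h a (p a) + h a (q a)) / 2) < (\<Sum>a\<in>UNIV. h a ((p a + q a) / 2))"
    by (rule sum_strict_mono_ex1) (simp, use mid_le in blast, use mid[OF a0] in blast)
  moreover have "(\<Sum>a\<in>UNIV. (h a (p a) + h a (q a)) / 2) = (entropyI h p + entropyI h q) / 2"
    by (simp add: entropyI_def sum.distrib sum_divide_distrib[symmetric])
  moreover have "pairing (\<lambda>a. (p a + q a) / 2) X = (pairing p X + pairing q X) / 2" for X
    by (simp add: pairing_def sum.distrib sum_divide_distrib[symmetric] algebra_simps)
  hence "(\<Sum>j\<in>UNIV. \<theta> $ j * pairing (\<lambda>a. (p a + q a) / 2) (H j))
      = ((\<Sum>j\<in>UNIV. \<theta> $ j * pairing p (H j)) + (\<Sum>j\<in>UNIV. \<theta> $ j * pairing q (H j))) / 2"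
    by (simp only: sum.distrib[symmetric] sum_divide_distrib[symmetric] distrib_left
        times_divide_eq_right)
  ultimately show ?thesis by (simp add: vp_obj_def entropyI_def)
qed

lemma var_principle_unique:
  fixes h :: "'a::finite \<Rightarrow> real \<Rightarrow> real" and H :: "'n::finite \<Rightarrow> 'a \<Rightarrow> real"
  assumes h_conc: "\<And>a. strictly_concave_on {0..1} (h a)"
    and vp: "var_principle h H \<theta> p" and vq: "var_principle h H \<theta> q"
  shows "p = q"
proof (rule ccontr)
  assume ne: "p \<noteq> q"
  have pP: "p \<in> prob_dists" and qP: "q \<in> prob_dists" using vp vq by (auto simp: var_principle_def)
  have "(\<lambda>a. (p a + q a) / 2) \<in> prob_dists"
    using pP qP by (auto simp: prob_dists_def sum.distrib sum_divide_distrib[symmetric])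
  hence "vp_obj h H \<theta> (\<lambda>a. (p a + q a) / 2) \<le> vp_obj h H \<theta> p"
    "vp_obj h H \<theta> (\<lambda>a. (p a + q a) / 2) \<le> vp_obj h H \<theta> q"
    using vp vq by (auto simp: var_principle_def)
  with vp_obj_midpoint_strict[where h=h and H=H and \<theta>=\<theta>, OF h_conc pP qP ne] show False by simp
qed

lemma var_principle_ptheta:
  fixes h :: "'a::finite \<Rightarrow> real \<Rightarrow> real" and H :: "'n::finite \<Rightarrow> 'a \<Rightarrow> real"
  assumes h_conc: "\<And>a. strictly_concave_on {0..1} (h a)" and "\<theta> \<in> domD h H"
  shows "var_principle h H \<theta> (ptheta h H \<theta>)"
proof -
  obtain p where p: "var_principle h H \<theta> p" using assms(2) by (auto simp: domD_def)
  show ?thesis unfolding ptheta_def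
  proof (rule theI[of _ p])
    fix q assume "var_principle h H \<theta> q"
    from var_principle_unique[OF h_conc this p] show "q = p" .
  qed (rule p)
qed

lemma vp_obj_directional_deriv:
  fixes h f :: "'a::finite \<Rightarrow> real \<Rightarrow> real" and H :: "'n::finite \<Rightarrow> 'a \<Rightarrow> real"
  assumes h_deriv: "\<And>a x. x \<in> {0<..<1} \<Longrightarrow> (h a has_real_derivative - f a x) (at x)"
    and interior: "\<And>c. e c \<noteq> 0 \<Longrightarrow> p c \<in> {0<..<1}"
  shows "((\<lambda>t. vp_obj h H \<theta> (\<lambda>c. p c + t * e c)) has_real_derivative
           - (\<Sum>c\<in>UNIV. f c (p c) * e c) - (\<Sum>j\<in>UNIV. \<theta> $ j * pairing e (H j))) (at 0)"
proof -
  have dh: "((\<lambda>t. h c (p c + t * e c)) has_real_derivative - f c (p c) * e c) (at 0)" for c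
  proof (cases "e c = 0")
    case False
    have dh: "(h c has_real_derivative - f c (p c)) (at ((\<lambda>t. p c + t * e c) 0))"
      using h_deriv[OF interior[OF False]] by simp
    have "((\<lambda>t. p c + t * e c) has_real_derivative e c) (at 0)"
      by (auto intro!: derivative_eq_intros)
    from DERIV_chain2[OF dh this] show ?thesis by simp
  qed simp
  have pairing_line: "pairing (\<lambda>c. p c + t * e c) X = pairing p X + t * pairing e X" for t X
    by (simp add: pairing_def algebra_simps sum.distrib sum_distrib_left)
  show ?thesis
    unfolding vp_obj_def entropyI_def pairing_line
    by (rule derivative_eq_intros DERIV_sum dh)+
       (auto intro!: derivative_eq_intros simp: sum_negf)
qed

text \<open>First-order condition of the variational principle: moving mass between two points of the
  support cannot increase the objective, so \<open>f_a(p_a) + \<Sum>_k \<theta>_k H_k(a)\<close> is constant on the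
  support (this constant is \<open>-\<alpha>(\<theta>)\<close>).\<close>
lemma stationarity:
  fixes h f :: "'a::finite \<Rightarrow> real \<Rightarrow> real" and H :: "'n::finite \<Rightarrow> 'a \<Rightarrow> real"
  assumes h_deriv: "\<And>a x. x \<in> {0<..<1} \<Longrightarrow> (h a has_real_derivative - f a x) (at x)"
    and vp: "var_principle h H \<theta> p" and ab: "a \<noteq> b" and pa: "p a > 0" and pb: "p b > 0"
  shows "f a (p a) + (\<Sum>k\<in>UNIV. \<theta> $ k * H k a) = f b (p b) + (\<Sum>k\<in>UNIV. \<theta> $ k * H k b)"
proof -
  have pP: "p \<in> prob_dists" using vp by (simp add: var_principle_def)
  have "(\<Sum>c\<in>{a, b}. p c) \<le> 1" by (rule prob_dist_sum_le_one[OF pP])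
  hence ab_le: "p a + p b \<le> 1" using ab by simp
  define e where "e c = (if c = a then 1 else 0) - (if c = b then 1 else (0::real))" for c
  have interior: "p c \<in> {0<..<1}" if "e c \<noteq> 0" for c
    using that pa pb ab_le by (auto simp: e_def split: if_splits)
  have sum_e: "(\<Sum>c\<in>UNIV. X c * e c) = X a - X b" for X :: "'a \<Rightarrow> real"
  proof -
    have "(\<Sum>c\<in>UNIV. X c * e c) = (\<Sum>c\<in>{a, b}. X c * e c)"
      by (rule sum.mono_neutral_right) (auto simp: e_def)
    thus ?thesis using ab by (simp add: e_def)
  qed
  define d where "d = min (p a) (p b)"
  have feasible: "(\<lambda>c. p c + t * e c) \<in> prob_dists" if "\<bar>t\<bar> < d" for t
  proof -
    have "\<bar>t\<bar> < p a" "\<bar>t\<bar> < p b" using that by (auto simp: d_def)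
    hence "0 \<le> p c + t * e c" for c
      using prob_dist_nonneg[OF pP, of c] ab by (cases "c = a"; cases "c = b") (auto simp: e_def)
    moreover have "(\<Sum>c\<in>UNIV. p c + t * e c) = 1"
      using pP sum_e[of "\<lambda>_. t"] by (simp add: prob_dists_def sum.distrib)
    ultimately show ?thesis by (simp add: prob_dists_def)
  qed
  have "\<forall>t. \<bar>0 - t\<bar> < d \<longrightarrow> vp_obj h H \<theta> (\<lambda>c. p c + t * e c) \<le> vp_obj h H \<theta> (\<lambda>c. p c + 0 * e c)"
    using vp feasible by (auto simp: var_principle_def)
  from DERIV_local_max[OF vp_obj_directional_deriv[OF h_deriv interior] _ this]
  have "(\<Sum>c\<in>UNIV. f c (p c) * e c) + (\<Sum>j\<in>UNIV. \<theta> $ j * pairing e (H j)) = 0"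
    using pa pb by (simp add: d_def)
  moreover have "pairing e X = X a - X b" for X
    using sum_e[of X] by (simp add: pairing_def mult.commute)
  ultimately show ?thesis
    using sum_e[of "\<lambda>c. f c (p c)"] by (simp add: right_diff_distrib sum_subtractf)
qed

lemma axis_line_in_open:
  fixes \<theta> :: "real^'n::finite"
  assumes "open D0" "\<theta> \<in> D0"
  obtains e where "e > 0" "\<And>t. \<bar>t\<bar> < e \<Longrightarrow> \<theta> + t *\<^sub>R axis i 1 \<in> D0"
proof -
  obtain e where e: "e > 0" "ball \<theta> e \<subseteq> D0" using assms openE by blast
  have "\<theta> + t *\<^sub>R axis i 1 \<in> D0" if "\<bar>t\<bar> < e" for t
    using that e(2) by (auto simp: dist_norm)
  with e(1) show ?thesis using that by blast
qed

lemma eventually_along_axis: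
  fixes \<theta> :: "real^'n::finite"
  assumes "eventually P (nhds \<theta>)"
  shows "eventually (\<lambda>t. P (\<theta> + t *\<^sub>R axis i 1)) (nhds 0)"
proof -
  have "((\<lambda>t::real. \<theta> + t *\<^sub>R axis i 1) \<longlongrightarrow> \<theta> + 0 *\<^sub>R axis i 1) (nhds 0)"
    by (intro tendsto_intros filterlim_ident)
  hence "filterlim (\<lambda>t::real. \<theta> + t *\<^sub>R axis i 1) (nhds \<theta>) (nhds 0)" by simp
  with assms show ?thesis by (rule eventually_compose_filterlim)
qed

lemma eventually_positive_nhds:
  assumes "continuous (at x) F" "F x > (0::real)"
  shows "eventually (\<lambda>y. F y > 0) (nhds x)"
proof -
  have "eventually (\<lambda>y. F y > 0) (at x)"
    using assms by (intro order_tendstoD(1)) (auto simp: continuous_at)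
  with assms(2) show ?thesis
    unfolding eventually_at_filter by (auto elim: eventually_mono)
qed

lemma partial_deriv_along_axis:
  fixes F :: "real^'n::finite \<Rightarrow> real"
  assumes "F differentiable (at \<theta>)"
  shows "((\<lambda>t. F (\<theta> + t *\<^sub>R axis i 1)) has_real_derivative partial_deriv F i \<theta>) (at 0)"
proof -
  have "(\<lambda>t::real. \<theta> + t *\<^sub>R axis i 1) differentiable (at 0)"
    by (intro derivative_intros)
  moreover have "F differentiable (at ((\<lambda>t::real. \<theta> + t *\<^sub>R axis i 1) 0))" using assms by simp
  ultimately have "(F \<circ> (\<lambda>t::real. \<theta> + t *\<^sub>R axis i 1)) differentiable (at 0)"
    by (rule differentiable_chain_at)
  thus ?thesis by (simp add: o_def partial_deriv_def DERIV_deriv_iff_real_differentiable)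
qed

lemma axis_shift_sum:
  fixes \<theta> :: "real^'n::finite"
  shows "(\<Sum>k\<in>UNIV. (\<theta> + t *\<^sub>R axis i 1) $ k * X k) = (\<Sum>k\<in>UNIV. \<theta> $ k * X k) + t * X i"
proof -
  have "(\<theta> + t *\<^sub>R axis i 1) $ k * X k = \<theta> $ k * X k + (if k = i then t * X i else 0)" for k
    by (simp add: axis_def distrib_right)
  thus ?thesis by (simp add: sum.distrib)
qed

lemma vp_obj_axis_shift:
  fixes \<theta> :: "real^'n::finite"
  shows "vp_obj h H (\<theta> + t *\<^sub>R axis j 1) q = vp_obj h H \<theta> q - t * pairing q (H j)"
  unfolding vp_obj_def axis_shift_sum by simp

text \<open>Comparing \<open>\<Phi>\<close> along the
  j-th axis with the affine function obtained by freezing \<open>p_\<theta>\<close> gives a minimum at \<open>t = 0\<close>.\<close>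
lemma massieu_partial:
  fixes h :: "'a::finite \<Rightarrow> real \<Rightarrow> real" and H :: "'n::finite \<Rightarrow> 'a \<Rightarrow> real"
  assumes vpD: "\<And>\<theta>'. \<theta>' \<in> D0 \<Longrightarrow> var_principle h H \<theta>' (ptheta h H \<theta>')"
    and "open D0" and \<theta>_in: "\<theta> \<in> D0" and partial: "has_partial (massieu h H) j \<theta>"
  shows "partial_deriv (massieu h H) j \<theta> = - pairing (ptheta h H \<theta>) (H j)"
proof -
  obtain e where e: "e > 0" "\<And>t. \<bar>t\<bar> < e \<Longrightarrow> \<theta> + t *\<^sub>R axis j 1 \<in> D0"
    using axis_line_in_open[OF \<open>open D0\<close> \<theta>_in] by blast
  define F where "F t = massieu h H (\<theta> + t *\<^sub>R axis j 1)" for t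
  define c where "c = pairing (ptheta h H \<theta>) (H j)"
  have "F differentiable (at 0)" using partial by (simp add: has_partial_def F_def[abs_def])
  hence "((\<lambda>t. F t + t * c) has_real_derivative deriv F 0 + c) (at 0)"
    by (auto intro!: derivative_eq_intros simp: DERIV_deriv_iff_real_differentiable)
  moreover have "\<forall>t. \<bar>0 - t\<bar> < e \<longrightarrow> F 0 + 0 * c \<le> F t + t * c"
  proof (intro allI impI)
    fix t :: real assume "\<bar>0 - t\<bar> < e"
    hence "var_principle h H (\<theta> + t *\<^sub>R axis j 1) (ptheta h H (\<theta> + t *\<^sub>R axis j 1))"
      using e vpD by auto
    moreover have "ptheta h H \<theta> \<in> prob_dists" using vpD[OF \<theta>_in] by (simp add: var_principle_def)
    ultimately have "vp_obj h H (\<theta> + t *\<^sub>R axis j 1) (ptheta h H \<theta>) \<le> F t"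
      by (simp add: var_principle_def F_def massieu_def)
    moreover have "F 0 = vp_obj h H \<theta> (ptheta h H \<theta>)" by (simp add: F_def massieu_def)
    ultimately show "F 0 + 0 * c \<le> F t + t * c"
      by (simp add: vp_obj_axis_shift c_def)
  qed
  ultimately have "deriv F 0 + c = 0" by (rule DERIV_local_min[OF _ e(1)])
  thus ?thesis by (simp add: partial_deriv_def F_def[abs_def] c_def)
qed

text \<open>A coordinate of \<open>p_\<theta>\<close> that vanishes at \<open>\<theta>\<close> is minimal there (probabilities are
  nonnegative), so its partial derivatives vanish.\<close>
lemma partial_deriv_vanishes_off_support:
  fixes h :: "'a::finite \<Rightarrow> real \<Rightarrow> real" and H :: "'n::finite \<Rightarrow> 'a \<Rightarrow> real"
  assumes vpD: "\<And>\<theta>'. \<theta>' \<in> D0 \<Longrightarrow> var_principle h H \<theta>' (ptheta h H \<theta>')"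
    and "open D0" and \<theta>_in: "\<theta> \<in> D0" and zero: "ptheta h H \<theta> a = 0"
    and diff: "(\<lambda>\<theta>'. ptheta h H \<theta>' a) differentiable (at \<theta>)"
  shows "partial_deriv (\<lambda>\<theta>'. ptheta h H \<theta>' a) i \<theta> = 0"
proof -
  obtain e where e: "e > 0" "\<And>t. \<bar>t\<bar> < e \<Longrightarrow> \<theta> + t *\<^sub>R axis i 1 \<in> D0"
    using axis_line_in_open[OF \<open>open D0\<close> \<theta>_in] by blast
  have "\<forall>t. \<bar>0 - t\<bar> < e \<longrightarrow> ptheta h H (\<theta> + 0 *\<^sub>R axis i 1) a \<le> ptheta h H (\<theta> + t *\<^sub>R axis i 1) a"
  proof (intro allI impI)
    fix t :: real assume "\<bar>0 - t\<bar> < e"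
    hence "ptheta h H (\<theta> + t *\<^sub>R axis i 1) \<in> prob_dists"
      using e vpD by (auto simp: var_principle_def)
    thus "ptheta h H (\<theta> + 0 *\<^sub>R axis i 1) a \<le> ptheta h H (\<theta> + t *\<^sub>R axis i 1) a"
      using zero by (simp add: prob_dist_nonneg)
  qed
  with partial_deriv_along_axis[OF diff] e(1) show ?thesis by (rule DERIV_local_min)
qed

text \<open>Differentiating the stationarity condition along the i-th axis: the quantity
  \<open>f_a'(p_{\<theta>,a}) \<partial>_i p_{\<theta>,a} + H_i(a)\<close> is the same for all points of the support.\<close>
lemma stationarity_response:
  fixes h f df :: "'a::finite \<Rightarrow> real \<Rightarrow> real" and H :: "'n::finite \<Rightarrow> 'a \<Rightarrow> real"
  assumes h_deriv: "\<And>a x. x \<in> {0<..<1} \<Longrightarrow> (h a has_real_derivative - f a x) (at x)"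
    and f_deriv: "\<And>a x. x \<in> {0<..1} \<Longrightarrow> (f a has_real_derivative df a x) (at x within {0<..1})"
    and vpD: "\<And>\<theta>'. \<theta>' \<in> D0 \<Longrightarrow> var_principle h H \<theta>' (ptheta h H \<theta>')"
    and "open D0" and \<theta>_in: "\<theta> \<in> D0" and ab: "a \<noteq> b"
    and pa: "ptheta h H \<theta> a > 0" and pb: "ptheta h H \<theta> b > 0"
    and p_diff: "\<And>c. (\<lambda>\<theta>'. ptheta h H \<theta>' c) differentiable (at \<theta>)"
  shows "df a (ptheta h H \<theta> a) * partial_deriv (\<lambda>\<theta>'. ptheta h H \<theta>' a) i \<theta> + H i a
       = df b (ptheta h H \<theta> b) * partial_deriv (\<lambda>\<theta>'. ptheta h H \<theta>' b) i \<theta> + H i b"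
proof -
  let ?p = "ptheta h H"
  have "(\<Sum>c\<in>{a, b}. ?p \<theta> c) \<le> 1"
    using vpD[OF \<theta>_in] by (intro prob_dist_sum_le_one) (simp add: var_principle_def)
  hence interior: "?p \<theta> c \<in> {0<..<1}" if "c \<in> {a, b}" for c
    using that pa pb ab by auto
  define L where "L c t = f c (?p (\<theta> + t *\<^sub>R axis i 1) c) + (\<Sum>k\<in>UNIV. (\<theta> + t *\<^sub>R axis i 1) $ k * H k c)"
    for c t
  have dL: "(L c has_real_derivative df c (?p \<theta> c) * partial_deriv (\<lambda>\<theta>'. ?p \<theta>' c) i \<theta> + H i c) (at 0)"
    if "c \<in> {a, b}" for c
  proof -
    have "(f c has_real_derivative df c (?p \<theta> c)) (at (?p \<theta> c) within {0<..<1})"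
      by (rule has_field_derivative_subset[OF f_deriv]) (use interior[OF that] in auto)
    hence "(f c has_real_derivative df c (?p \<theta> c)) (at (?p \<theta> c))"
      using interior[OF that] by (simp add: at_within_open[of _ "{0<..<1}"])
    from DERIV_chain2[OF _ partial_deriv_along_axis[OF p_diff]] this
    show ?thesis unfolding L_def[abs_def] axis_shift_sum
      by (auto intro!: derivative_eq_intros)
  qed
  have "eventually (\<lambda>\<theta>'. \<theta>' \<in> D0 \<and> ?p \<theta>' a > 0 \<and> ?p \<theta>' b > 0) (nhds \<theta>)"
    by (intro eventually_conj eventually_nhds_in_open[OF \<open>open D0\<close> \<theta>_in]
        eventually_positive_nhds[OF differentiable_imp_continuous_within[OF p_diff]] pa pb)
  hence "eventually (\<lambda>t. L a t = L b t) (nhds 0)"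
  proof (rule eventually_mono[OF eventually_along_axis[where i=i]])
    fix t assume t: "\<theta> + t *\<^sub>R axis i 1 \<in> D0 \<and> ?p (\<theta> + t *\<^sub>R axis i 1) a > 0
      \<and> ?p (\<theta> + t *\<^sub>R axis i 1) b > 0"
    show "L a t = L b t" unfolding L_def
      by (rule stationarity[OF h_deriv vpD[OF conjunct1[OF t]] ab]) (use t in blast)+
  qed
  hence "(L b has_real_derivative df a (?p \<theta> a) * partial_deriv (\<lambda>\<theta>'. ?p \<theta>' a) i \<theta> + H i a) (at 0)"
    using dL[of a] DERIV_cong_ev[OF refl _ refl] by auto
  with dL[of b] show ?thesis by (simp add: DERIV_unique)
qed

lemma phi_pos_on_support:
  assumes pP: "p \<in> prob_dists" and pos: "p a > 0"
    and df_pos: "\<And>a x. x \<in> {0<..1} \<Longrightarrow> df a x > 0"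
  shows "phi df a (p a) > 0"
proof -
  have "p a \<le> 1" using prob_dist_sum_le_one[OF pP, of "{a}"] by simp
  with pos df_pos[of "p a" a] show ?thesis by (simp add: phi_def)
qed

lemma zfun_pos:
  assumes pP: "ptheta h H \<theta> \<in> prob_dists"
    and df_pos: "\<And>a x. x \<in> {0<..1} \<Longrightarrow> df a x > 0"
  shows "zfun h df H \<theta> > 0"
proof -
  have "{a. ptheta h H \<theta> a > 0} \<noteq> {}" using prob_dist_support_nonempty[OF pP] by blast
  thus ?thesis unfolding zfun_def
    by (intro sum_pos) (auto intro: phi_pos_on_support[where df=df, OF pP _ df_pos])
qed

lemma escort_pos_iff:
  assumes pP: "ptheta h H \<theta> \<in> prob_dists"
    and df_pos: "\<And>a x. x \<in> {0<..1} \<Longrightarrow> df a x > 0"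
  shows "escort h df H \<theta> a > 0 \<longleftrightarrow> ptheta h H \<theta> a > 0"
  using phi_pos_on_support[where df=df, OF pP _ df_pos, of a] zfun_pos[where df=df, OF pP df_pos]
  by (simp add: escort_def)

lemma escort_sum_one:
  assumes pP: "ptheta h H \<theta> \<in> prob_dists"
    and df_pos: "\<And>a x. x \<in> {0<..1} \<Longrightarrow> df a x > 0"
  shows "(\<Sum>a\<in>UNIV. escort h df H \<theta> a) = 1"
proof -
  have "(\<Sum>a\<in>UNIV. escort h df H \<theta> a)
      = (\<Sum>a\<in>{a. ptheta h H \<theta> a > 0}. phi df a (ptheta h H \<theta> a)) / zfun h df H \<theta>"
    by (simp add: escort_def sum.If_cases sum_divide_distrib Collect_conv_if)
  also have "\<dots> = 1" using zfun_pos[where df=df, OF pP df_pos] by (simp add: zfun_def)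
  finally show ?thesis .
qed

text \<open>On the support this is the differentiated stationarity condition with an unknown constant K,
  off the support both sides vanish, and \<open>\<Sum>_a \<partial>_i p_{\<theta>,a} = 0\<close> identifies \<open>K = \<langle>P_\<theta>, H_i\<rangle>\<close>.\<close>
lemma response_formula:
  fixes h f df :: "'a::finite \<Rightarrow> real \<Rightarrow> real" and H :: "'n::finite \<Rightarrow> 'a \<Rightarrow> real"
  assumes h_deriv: "\<And>a x. x \<in> {0<..<1} \<Longrightarrow> (h a has_real_derivative - f a x) (at x)"
    and f_deriv: "\<And>a x. x \<in> {0<..1} \<Longrightarrow> (f a has_real_derivative df a x) (at x within {0<..1})"
    and df_pos: "\<And>a x. x \<in> {0<..1} \<Longrightarrow> df a x > 0"
    and vpD: "\<And>\<theta>'. \<theta>' \<in> D0 \<Longrightarrow> var_principle h H \<theta>' (ptheta h H \<theta>')"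
    and "open D0" and \<theta>_in: "\<theta> \<in> D0"
    and p_diff: "\<And>a. (\<lambda>\<theta>'. ptheta h H \<theta>' a) differentiable (at \<theta>)"
    and p_sum: "(\<Sum>a\<in>UNIV. partial_deriv (\<lambda>\<theta>'. ptheta h H \<theta>' a) i \<theta>) = 0"
  shows "partial_deriv (\<lambda>\<theta>'. ptheta h H \<theta>' a) i \<theta>
       = zfun h df H \<theta> * escort h df H \<theta> a * (pairing (escort h df H \<theta>) (H i) - H i a)"
proof -
  let ?p = "ptheta h H \<theta>" and ?P = "escort h df H \<theta>" and ?z = "zfun h df H \<theta>"
  define D where "D a = partial_deriv (\<lambda>\<theta>'. ptheta h H \<theta>' a) i \<theta>" for a
  have pP: "?p \<in> prob_dists" using vpD[OF \<theta>_in] by (simp add: var_principle_def)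
  have zpos: "?z > 0" by (rule zfun_pos[where df=df, OF pP df_pos])
  obtain b where b: "?p b > 0" using prob_dist_support_nonempty[OF pP] .
  define K where "K = df b (?p b) * D b + H i b"
  have linear: "D a = ?z * ?P a * (K - H i a)" for a
  proof (cases "?p a > 0")
    case True
    have "df a (?p a) * D a + H i a = K"
      using stationarity_response[OF h_deriv f_deriv vpD \<open>open D0\<close> \<theta>_in _ True b p_diff]
      by (cases "a = b") (auto simp: K_def D_def)
    moreover have "phi df a (?p a) > 0" by (rule phi_pos_on_support[where df=df, OF pP True df_pos])
    ultimately show ?thesis using True zpos by (simp add: escort_def phi_def field_simps)
  next
    case False
    hence "?p a = 0" using prob_dist_nonneg[OF pP, of a] by simp
    from partial_deriv_vanishes_off_support[OF vpD \<open>open D0\<close> \<theta>_in this p_diff]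
    show ?thesis using False by (simp add: D_def escort_def)
  qed
  have "0 = (\<Sum>a\<in>UNIV. D a)" using p_sum by (simp add: D_def)
  also have "\<dots> = ?z * pairing ?P (\<lambda>a. (K - H i a) * 1)"
    by (simp add: linear pairing_def sum_distrib_left mult.assoc)
  also have "\<dots> = ?z * (K - pairing ?P (H i))"
    using escort_sum_one[where df=df, OF pP df_pos] pairing_shifted[of ?P K "H i" "\<lambda>_. 1"]
    by (simp add: pairing_def)
  finally have "K = pairing ?P (H i)" using zpos by simp
  thus ?thesis using linear by (simp add: D_def)
qed

text \<open>By the envelope theorem, \<open>g_{i,j} = -\<Sum>_a \<partial>_i p_{\<theta>,a} H_j(a)\<close>.\<close>
lemma metric_response:
  fixes h :: "'a::finite \<Rightarrow> real \<Rightarrow> real" and H :: "'n::finite \<Rightarrow> 'a \<Rightarrow> real"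
  assumes vpD: "\<And>\<theta>'. \<theta>' \<in> D0 \<Longrightarrow> var_principle h H \<theta>' (ptheta h H \<theta>')"
    and "open D0" and \<theta>_in: "\<theta> \<in> D0"
    and p_diff: "\<And>a. (\<lambda>\<theta>'. ptheta h H \<theta>' a) differentiable (at \<theta>)"
    and g_exists: "metric_g_exists h H \<theta> i j"
  shows "metric_g h H \<theta> i j = - (\<Sum>a\<in>UNIV. partial_deriv (\<lambda>\<theta>'. ptheta h H \<theta>' a) i \<theta> * H j a)"
proof -
  have "eventually (\<lambda>\<theta>'. \<theta>' \<in> D0 \<and> has_partial (massieu h H) j \<theta>') (nhds \<theta>)"
    using g_exists eventually_nhds_in_open[OF \<open>open D0\<close> \<theta>_in]
    by (simp add: metric_g_exists_def eventually_conj)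
  hence ev: "eventually (\<lambda>t. partial_deriv (massieu h H) j (\<theta> + t *\<^sub>R axis i 1)
           = - (\<Sum>a\<in>UNIV. ptheta h H (\<theta> + t *\<^sub>R axis i 1) a * H j a)) (nhds 0)"
  proof (rule eventually_mono[OF eventually_along_axis[where i=i]])
    fix t assume "\<theta> + t *\<^sub>R axis i 1 \<in> D0 \<and> has_partial (massieu h H) j (\<theta> + t *\<^sub>R axis i 1)"
    with massieu_partial[OF vpD \<open>open D0\<close>]
    show "partial_deriv (massieu h H) j (\<theta> + t *\<^sub>R axis i 1)
        = - (\<Sum>a\<in>UNIV. ptheta h H (\<theta> + t *\<^sub>R axis i 1) a * H j a)"
      by (simp add: pairing_def)
  qed
  have "((\<lambda>t. - (\<Sum>a\<in>UNIV. ptheta h H (\<theta> + t *\<^sub>R axis i 1) a * H j a)) has_real_derivative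
      - (\<Sum>a\<in>UNIV. partial_deriv (\<lambda>\<theta>'. ptheta h H \<theta>' a) i \<theta> * H j a)) (at 0)"
    by (intro derivative_intros DERIV_cmult_right partial_deriv_along_axis p_diff)
  hence "((\<lambda>t. partial_deriv (massieu h H) j (\<theta> + t *\<^sub>R axis i 1)) has_real_derivative
      - (\<Sum>a\<in>UNIV. partial_deriv (\<lambda>\<theta>'. ptheta h H \<theta>' a) i \<theta> * H j a)) (at 0)"
    using DERIV_cong_ev[OF refl ev refl] by simp
  thus ?thesis unfolding metric_g_def partial_deriv_def[of "partial_deriv (massieu h H) j"]
    by (rule DERIV_imp_deriv)
qed

text \<open>With the response formula the score variables are \<open>z (\<langle>P,H_i\<rangle> - H_i)\<close>, so the Fisher
  information is \<open>z^2\<close> times the escort covariance.\<close>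
lemma fisher_eq_scaled_covar:
  assumes pP: "ptheta h H \<theta> \<in> prob_dists"
    and df_pos: "\<And>a x. x \<in> {0<..1} \<Longrightarrow> df a x > 0"
    and response: "\<And>a i. partial_deriv (\<lambda>\<theta>'. ptheta h H \<theta>' a) i \<theta>
      = zfun h df H \<theta> * escort h df H \<theta> a * (pairing (escort h df H \<theta>) (H i) - H i a)"
  shows "fisher h df H \<theta> i j = (zfun h df H \<theta>)\<^sup>2 * covar h df H \<theta> i j"
proof -
  let ?P = "escort h df H \<theta>" and ?z = "zfun h df H \<theta>"
  define c where "c i = pairing ?P (H i)" for i
  have score: "score h df H \<theta> i a = ?z * (c i - H i a)" if "?P a > 0" for i a
    using that by (simp add: score_def response c_def)
  have off_support: "?P a = 0" if "\<not> ?P a > 0" for a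
    using that escort_pos_iff[where df=df, OF pP df_pos, of a] by (simp add: escort_def)
  have "fisher h df H \<theta> i j = (\<Sum>a\<in>{a. ?P a > 0}. ?z\<^sup>2 * (?P a * ((c i - H i a) * (c j - H j a))))"
    unfolding fisher_def by (rule sum.cong) (auto simp: score power2_eq_square)
  also have "\<dots> = ?z\<^sup>2 * pairing ?P (\<lambda>a. (c i - H i a) * (c j - H j a))"
    unfolding pairing_def sum_distrib_left
    by (rule sum.mono_neutral_left) (auto simp: off_support)
  also have "\<dots> = ?z\<^sup>2 * covar h df H \<theta> i j"
    using pairing_centered_product[OF escort_sum_one[where df=df, OF pP df_pos]]
    by (simp add: covar_def c_def)
  finally show ?thesis .
qed

lemma metric_eq_scaled_covar:
  assumes pP: "ptheta h H \<theta> \<in> prob_dists"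
    and df_pos: "\<And>a x. x \<in> {0<..1} \<Longrightarrow> df a x > 0"
    and response: "\<And>a i. partial_deriv (\<lambda>\<theta>'. ptheta h H \<theta>' a) i \<theta>
      = zfun h df H \<theta> * escort h df H \<theta> a * (pairing (escort h df H \<theta>) (H i) - H i a)"
    and metric: "metric_g h H \<theta> i j
      = - (\<Sum>a\<in>UNIV. partial_deriv (\<lambda>\<theta>'. ptheta h H \<theta>' a) i \<theta> * H j a)"
  shows "metric_g h H \<theta> i j = zfun h df H \<theta> * covar h df H \<theta> i j"
proof -
  let ?P = "escort h df H \<theta>" and ?z = "zfun h df H \<theta>"
  have "metric_g h H \<theta> i j = - ?z * pairing ?P (\<lambda>a. (pairing ?P (H i) - H i a) * H j a)"
    by (simp add: metric response pairing_def sum_distrib_left mult.assoc sum_negf)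
  also have "\<dots> = ?z * covar h df H \<theta> i j"
    unfolding pairing_shifted covar_def by (simp add: algebra_simps)
  finally show ?thesis .
qed

theorem mainTheorem10:
  fixes h f df :: "'a::finite \<Rightarrow> real \<Rightarrow> real"
    and H :: "'n::finite \<Rightarrow> 'a \<Rightarrow> real"
    and D0 :: "(real^'n) set"
    and \<theta> :: "real^'n"
  assumes h_cont: "\<And>a. continuous_on {0..1} (h a)"
    and h_conc: "\<And>a. strictly_concave_on {0..1} (h a)"
    and h0: "\<And>a. h a 0 = 0" and h1: "\<And>a. h a 1 = 0"
    and h_deriv: "\<And>a x. x \<in> {0<..<1} \<Longrightarrow> (h a has_real_derivative - f a x) (at x)"
    and f_deriv: "\<And>a x. x \<in> {0<..1} \<Longrightarrow> (f a has_real_derivative df a x) (at x within {0<..1})"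
    and df_pos: "\<And>a x. x \<in> {0<..1} \<Longrightarrow> df a x > 0"
    and D0_open: "open D0" and D0_sub: "D0 \<subseteq> domD h H" and \<theta>_in: "\<theta> \<in> D0"
    and alpha_diff: "alpha h f H differentiable (at \<theta>)"
    and p_diff: "\<And>a. (\<lambda>\<theta>'. ptheta h H \<theta>' a) differentiable (at \<theta>)"
    and p_sum: "\<And>j. (\<Sum>a\<in>UNIV. partial_deriv (\<lambda>\<theta>'. ptheta h H \<theta>' a) j \<theta>) = 0"
    and g_exists: "\<And>i j. metric_g_exists h H \<theta> i j"
  shows "\<forall>i j. fisher h df H \<theta> i j = zfun h df H \<theta> * metric_g h H \<theta> i j
           \<and> zfun h df H \<theta> * metric_g h H \<theta> i j = (zfun h df H \<theta>)\<^sup>2 * covar h df H \<theta> i j"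
proof (intro allI)
  fix i j
  have vpD: "\<And>\<theta>'. \<theta>' \<in> D0 \<Longrightarrow> var_principle h H \<theta>' (ptheta h H \<theta>')"
    using var_principle_ptheta[where h=h, OF h_conc] D0_sub by blast
  have pP: "ptheta h H \<theta> \<in> prob_dists" using vpD[OF \<theta>_in] by (simp add: var_principle_def)
  note response = response_formula[OF h_deriv f_deriv df_pos vpD D0_open \<theta>_in p_diff p_sum]
  have "fisher h df H \<theta> i j = (zfun h df H \<theta>)\<^sup>2 * covar h df H \<theta> i j"
    by (rule fisher_eq_scaled_covar[where df=df, OF pP df_pos response])
  moreover have "metric_g h H \<theta> i j = zfun h df H \<theta> * covar h df H \<theta> i j"
    by (rule metric_eq_scaled_covar[where df=df, OF pP df_pos response
          metric_response[OF vpD D0_open \<theta>_in p_diff g_exists]])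
  ultimately show "fisher h df H \<theta> i j = zfun h df H \<theta> * metric_g h H \<theta> i j
           \<and> zfun h df H \<theta> * metric_g h H \<theta> i j = (zfun h df H \<theta>)\<^sup>2 * covar h df H \<theta> i j"
    by (simp add: power2_eq_square)
qed

end
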